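(* For every integer $m\geq 1$, $$A_{2,m}=\frac{(m-1)m(m+1)(m+\lambda)(m+\lambda+1)(m+\lambda+2)\big[m^2+(\lambda+1)m+\frac{4\lambda^2+2\lambda-14}{3(2\lambda+3)}\big]}{2(2\lambda+1)(2\lambda+5)}$$ and $$\widetilde A_{2,m}=\frac{(m-1)m(m+\lambda)(m+\lambda+1)\,r_\lambda(m)}{24(2\lambda+1)(2\lambda+3)(2\lambda+5)},$$ where $$r_\lambda(m)=12(2\lambda+3)m^4+24\lambda(2\lambda+3)m^3+4(6\lambda^3+7\lambda^2-19\lambda-32)m^2-4\lambda(2\lambda^2+19\lambda+32)m-8\lambda^3-20\lambda^2+14\lambda+71.$$
   Context: Fix $\lambda>-1/2$. Define polynomials $Q_m$ by $Q_0=1$, $Q_1(\mu)=1-\frac{2(\lambda+1)(\lambda+2)}{2\lambda+1}\mu$ and, for $m\geq2$, $$Q_m-Q_{m-1}=\frac{m(2m-1)(2m+\lambda)}{(m-1+\lambda)(2m-2+\lambda)(2m-1+2\lambda)}\big[Q_{m-1}-Q_{m-2}\big]-\frac{2m(2m-1+\lambda)(2m+\lambda)}{2m-1+2\lambda}\,\mu\,Q_{m-1}(\mu).$$ Define $\widetilde Q_m$ by $\widetilde Q_0=1$, $\widetilde Q_1(\mu)=1-\frac{\lambda+1}{2}\mu$ and, for $m\geq2$, $$\widetilde Q_m-\widetilde Q_{m-1}=\frac{(m-1)(2m-1)(2m-1+\lambda)}{(m-1+\lambda)(2m-3+\lambda)(2m-3+2\lambda)}\big[\widetilde Q_{m-1}-\widetilde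 Q_{m-2}\big]-\frac{(2m-1)(2m-2+\lambda)(2m-1+\lambda)}{2(m-1+\lambda)}\,\mu\,\widetilde Q_{m-1}(\mu).$$ Write $Q_m(\mu)=\sum_{i=0}^m(-1)^iA_{i,m}\mu^i$ and $\widetilde Q_m(\mu)=\sum_{i=0}^m(-1)^i\widetilde A_{i,m}\mu^i$, with $A_{i,m}=\widetilde A_{i,m}=0$ for $i>m$. *)

theory Defs
  imports "HOL-Computational_Algebra.Polynomial"
begin

text \<open>The polynomials Q_m (in the variable mu), parameter l = lambda.
  Q l (Suc (Suc n)) is Q_m with m = n + 2.\<close>
fun Qpoly :: "real \<Rightarrow> nat \<Rightarrow> real poly" where
  "Qpoly l 0 = 1"
| "Qpoly l (Suc 0) = [:1, - (2 * (l + 1) * (l + 2) / (2 * l + 1)):]"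
| "Qpoly l (Suc (Suc n)) =
     (let m = real n + 2 in
      Qpoly l (Suc n)
      + smult (m * (2*m - 1) * (2*m + l) / ((m - 1 + l) * (2*m - 2 + l) * (2*m - 1 + 2*l)))
              (Qpoly l (Suc n) - Qpoly l n)
      - smult (2 * m * (2*m - 1 + l) * (2*m + l) / (2*m - 1 + 2*l))
              (monom 1 1 * Qpoly l (Suc n)))"

fun Qtpoly :: "real \<Rightarrow> nat \<Rightarrow> real poly" where
  "Qtpoly l 0 = 1"
| "Qtpoly l (Suc 0) = [:1, - ((l + 1) / 2):]"
| "Qtpoly l (Suc (Suc n)) =
     (let m = real n + 2 in
      Qtpoly l (Suc n)
      + smult ((m - 1) * (2*m - 1) * (2*m - 1 + l) / ((m - 1 + l) * (2*m - 3 + l) * (2*m - 3 + 2*l)))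
              (Qtpoly l (Suc n) - Qtpoly l n)
      - smult ((2*m - 1) * (2*m - 2 + l) * (2*m - 1 + l) / (2 * (m - 1 + l)))
              (monom 1 1 * Qtpoly l (Suc n)))"

definition Acoef :: "real \<Rightarrow> nat \<Rightarrow> nat \<Rightarrow> real" where
  "Acoef l i m = (-1) ^ i * coeff (Qpoly l m) i"

definition Atcoef :: "real \<Rightarrow> nat \<Rightarrow> nat \<Rightarrow> real" where
  "Atcoef l i m = (-1) ^ i * coeff (Qtpoly l m) i"

definition r_lam :: "real \<Rightarrow> real \<Rightarrow> real" where
  "r_lam l m = 12*(2*l+3)*m^4 + 24*l*(2*l+3)*m^3 + 4*(6*l^3 + 7*l^2 - 19*l - 32)*m^2
     - 4*l*(2*l^2 + 19*l + 32)*m - 8*l^3 - 20*l^2 + 14*l + 71"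

end

theory Submission
  imports Defs
begin

text \<open>Read coefficientwise, the recurrence defining \<open>Q_m\<close> says that the coefficient of
  \<open>\<mu>^i\<close> satisfies a two-term linear recurrence in \<open>m\<close> whose inhomogeneous part is built from
  the coefficient of \<open>\<mu>^(i-1)\<close>, and likewise for the polynomials \<open>Q\<close>-tilde. Such a recurrence
  has a unique solution with prescribed values at \<open>m = 0, 1\<close>, so for \<open>i = 0, 1, 2\<close> in turn
  it suffices to check that the claimed closed forms satisfy it. That is an identity of
  rational functions in \<open>m\<close> and \<open>\<lambda>\<close>; for \<open>\<lambda> > -1/2\<close> and \<open>m \<ge> 2\<close> no denominator vanishes,
  and after clearing them it is a polynomial identity.\<close>

lemma coeff_recurrence_step:
  fixes p q :: "'a::comm_ring_1 poly"
  shows "coeff (p + smult a (p - q) - smult b (monom 1 1 * p)) i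
    = coeff p i + a * (coeff p i - coeff q i) - b * (if i = 0 then 0 else coeff p (i - 1))"
  by (simp add: coeff_monom_mult)

lemma two_term_recurrence_unique:
  fixes u v a b :: "nat \<Rightarrow> 'a::comm_ring"
  assumes "u 0 = v 0" "u (Suc 0) = v (Suc 0)"
    and "\<And>n. u (Suc (Suc n)) = u (Suc n) + a n * (u (Suc n) - u n) - b n"
    and "\<And>n. v (Suc (Suc n)) = v (Suc n) + a n * (v (Suc n) - v n) - b n"
  shows "u n = v n"
proof (induction n rule: induct_nat_012)
  case (ge2 n)
  then show ?case using assms(3,4)[of n] by simp
qed (use assms(1,2) in simp_all)

lemma recurrence_of_cleared:
  fixes F0 F1 F2 z N B D K beta :: "'a::field"
  assumes "D \<noteq> 0" "K \<noteq> 0" "beta * D = B"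
    and "D * F2 = D * F1 + N * (F1 - F0) - B * (K * z)"
  shows "F2 / K = F1 / K + N / D * (F1 / K - F0 / K) - beta * z"
proof -
  have "D * (F1 + N / D * (F1 - F0) - beta * (K * z)) = D * F1 + N * (F1 - F0) - (beta * D) * (K * z)"
    using assms(1) by (simp add: field_simps)
  then have "D * F2 = D * (F1 + N / D * (F1 - F0) - beta * (K * z))"
    using assms(3,4) by simp
  then have "F2 = F1 + N / D * (F1 - F0) - beta * (K * z)"
    using assms(1) by simp
  then show ?thesis using assms(1,2) by (simp add: field_simps)
qed

definition Q_alpha :: "real \<Rightarrow> real \<Rightarrow> real" where
  "Q_alpha l m = m * (2*m - 1) * (2*m + l) / ((m - 1 + l) * (2*m - 2 + l) * (2*m - 1 + 2*l))"

definition Q_beta :: "real \<Rightarrow> real \<Rightarrow> real" where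
  "Q_beta l m = 2 * m * (2*m - 1 + l) * (2*m + l) / (2*m - 1 + 2*l)"

definition Qt_alpha :: "real \<Rightarrow> real \<Rightarrow> real" where
  "Qt_alpha l m = (m - 1) * (2*m - 1) * (2*m - 1 + l) / ((m - 1 + l) * (2*m - 3 + l) * (2*m - 3 + 2*l))"

definition Qt_beta :: "real \<Rightarrow> real \<Rightarrow> real" where
  "Qt_beta l m = (2*m - 1) * (2*m - 2 + l) * (2*m - 1 + l) / (2 * (m - 1 + l))"

lemma coeff_Qpoly_Suc_Suc:
  "coeff (Qpoly l (Suc (Suc n))) i = coeff (Qpoly l (Suc n)) i
     + Q_alpha l (real n + 2) * (coeff (Qpoly l (Suc n)) i - coeff (Qpoly l n) i)
     - Q_beta l (real n + 2) * (if i = 0 then 0 else coeff (Qpoly l (Suc n)) (i - 1))"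
  unfolding Qpoly.simps(3) Let_def Q_alpha_def Q_beta_def by (rule coeff_recurrence_step)

lemma coeff_Qtpoly_Suc_Suc:
  "coeff (Qtpoly l (Suc (Suc n))) i = coeff (Qtpoly l (Suc n)) i
     + Qt_alpha l (real n + 2) * (coeff (Qtpoly l (Suc n)) i - coeff (Qtpoly l n) i)
     - Qt_beta l (real n + 2) * (if i = 0 then 0 else coeff (Qtpoly l (Suc n)) (i - 1))"
  unfolding Qtpoly.simps(3) Let_def Qt_alpha_def Qt_beta_def by (rule coeff_recurrence_step)

declare Qpoly.simps(3) [simp del] Qtpoly.simps(3) [simp del]

definition Q_coeff1 :: "real \<Rightarrow> real \<Rightarrow> real" where
  "Q_coeff1 l m = - m * (m + 1) * (m + l) * (m + l + 1) / (2*l + 1)"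

definition Q_coeff2 :: "real \<Rightarrow> real \<Rightarrow> real" where
  "Q_coeff2 l m = (m - 1) * m * (m + 1) * (m + l) * (m + l + 1) * (m + l + 2)
     * (3 * (2*l + 3) * (m^2 + (l + 1) * m) + 4*l^2 + 2*l - 14) / (6 * (2*l + 1) * (2*l + 3) * (2*l + 5))"

definition Qt_coeff1 :: "real \<Rightarrow> real \<Rightarrow> real" where
  "Qt_coeff1 l m = - m * (m + l) * (2*m^2 + 2*l*m - 1) / (2 * (2*l + 1))"

definition Qt_coeff2 :: "real \<Rightarrow> real \<Rightarrow> real" where
  "Qt_coeff2 l m = (m - 1) * m * (m + l) * (m + l + 1) * r_lam l m / (24 * (2*l + 1) * (2*l + 3) * (2*l + 5))"

text \<open>The factor \<open>1\<close> below is the coefficient of \<open>\<mu>^0\<close>, see \<open>coeff_Qpoly_0\<close>.\<close>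

lemma Q_coeff1_recurrence:
  assumes "l > -1/2" "m \<ge> 2"
  shows "Q_coeff1 l m = Q_coeff1 l (m - 1) + Q_alpha l m * (Q_coeff1 l (m - 1) - Q_coeff1 l (m - 2)) - Q_beta l m * 1"
proof -
  have nz: "m - 1 + l \<noteq> 0" "2*m - 2 + l \<noteq> 0" "2*m - 1 + 2*l \<noteq> 0" "2*l + 1 \<noteq> 0"
    using assms by auto
  have beta: "Q_beta l m * ((m - 1 + l) * (2*m - 2 + l) * (2*m - 1 + 2*l))
      = 2 * m * (2*m - 1 + l) * (2*m + l) * (m - 1 + l) * (2*m - 2 + l)"
    using nz by (simp add: Q_beta_def field_simps)
  show ?thesis unfolding Q_coeff1_def Q_alpha_def
    by (rule recurrence_of_cleared[OF _ _ beta], use nz in simp, use nz in simp, algebra)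
qed

lemma Q_coeff2_recurrence:
  assumes "l > -1/2" "m \<ge> 2"
  shows "Q_coeff2 l m = Q_coeff2 l (m - 1) + Q_alpha l m * (Q_coeff2 l (m - 1) - Q_coeff2 l (m - 2))
    - Q_beta l m * Q_coeff1 l (m - 1)"
proof -
  have nz: "m - 1 + l \<noteq> 0" "2*m - 2 + l \<noteq> 0" "2*m - 1 + 2*l \<noteq> 0" "2*l + 1 \<noteq> 0" "2*l + 3 \<noteq> 0" "2*l + 5 \<noteq> 0"
    using assms by auto
  have beta: "Q_beta l m * ((m - 1 + l) * (2*m - 2 + l) * (2*m - 1 + 2*l))
      = 2 * m * (2*m - 1 + l) * (2*m + l) * (m - 1 + l) * (2*m - 2 + l)"
    using nz by (simp add: Q_beta_def field_simps)
  have coeff1_cleared: "6 * (2*l + 1) * (2*l + 3) * (2*l + 5) * Q_coeff1 l (m - 1)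
      = - 6 * (2*l + 3) * (2*l + 5) * ((m - 1) * m * (m - 1 + l) * (m + l))"
    using nz by (simp add: Q_coeff1_def field_simps)
  show ?thesis unfolding Q_coeff2_def Q_alpha_def
    by (rule recurrence_of_cleared[OF _ _ beta], use nz in simp, use nz in simp, use coeff1_cleared in algebra)
qed

lemma Qt_coeff1_recurrence:
  assumes "l > -1/2" "m \<ge> 2"
  shows "Qt_coeff1 l m = Qt_coeff1 l (m - 1) + Qt_alpha l m * (Qt_coeff1 l (m - 1) - Qt_coeff1 l (m - 2)) - Qt_beta l m * 1"
proof -
  have nz: "m - 1 + l \<noteq> 0" "2*m - 3 + l \<noteq> 0" "2*m - 3 + 2*l \<noteq> 0" "2*l + 1 \<noteq> 0"
    using assms by auto
  have beta: "Qt_beta l m * ((m - 1 + l) * (2*m - 3 + l) * (2*m - 3 + 2*l))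
      = (2*m - 1) * (2*m - 2 + l) * (2*m - 1 + l) * (2*m - 3 + l) * (2*m - 3 + 2*l) / 2"
    using nz by (simp add: Qt_beta_def field_simps)
  show ?thesis unfolding Qt_coeff1_def Qt_alpha_def
    by (rule recurrence_of_cleared[OF _ _ beta], use nz in simp, use nz in simp, algebra)
qed

lemma Qt_coeff2_recurrence:
  assumes "l > -1/2" "m \<ge> 2"
  shows "Qt_coeff2 l m = Qt_coeff2 l (m - 1) + Qt_alpha l m * (Qt_coeff2 l (m - 1) - Qt_coeff2 l (m - 2))
    - Qt_beta l m * Qt_coeff1 l (m - 1)"
proof -
  have nz: "m - 1 + l \<noteq> 0" "2*m - 3 + l \<noteq> 0" "2*m - 3 + 2*l \<noteq> 0" "2*l + 1 \<noteq> 0" "2*l + 3 \<noteq> 0" "2*l + 5 \<noteq> 0"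
    using assms by auto
  have beta: "Qt_beta l m * ((m - 1 + l) * (2*m - 3 + l) * (2*m - 3 + 2*l))
      = (2*m - 1) * (2*m - 2 + l) * (2*m - 1 + l) * (2*m - 3 + l) * (2*m - 3 + 2*l) / 2"
    using nz by (simp add: Qt_beta_def field_simps)
  have coeff1_cleared: "24 * (2*l + 1) * (2*l + 3) * (2*l + 5) * Qt_coeff1 l (m - 1)
      = - 12 * (2*l + 3) * (2*l + 5) * ((m - 1) * (m - 1 + l) * (2*(m - 1)^2 + 2*l*(m - 1) - 1))"
    using nz by (simp add: Qt_coeff1_def field_simps)
  show ?thesis unfolding Qt_coeff2_def Qt_alpha_def r_lam_def
    by (rule recurrence_of_cleared[OF _ _ beta], use nz in simp, use nz in simp, use coeff1_cleared in algebra)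
qed

lemma real_Suc_Suc_shifts:
  "real (Suc (Suc n)) = real n + 2" "real n + 2 - 1 = real (Suc n)" "real n + 2 - 2 = real n"
  by simp_all

lemma coeff_Qpoly_0: "coeff (Qpoly l n) 0 = 1"
  by (rule two_term_recurrence_unique[where a = "\<lambda>n. Q_alpha l (real n + 2)" and b = "\<lambda>_. 0"])
    (simp_all add: coeff_Qpoly_Suc_Suc)

lemma coeff_Qtpoly_0: "coeff (Qtpoly l n) 0 = 1"
  by (rule two_term_recurrence_unique[where a = "\<lambda>n. Qt_alpha l (real n + 2)" and b = "\<lambda>_. 0"])
    (simp_all add: coeff_Qtpoly_Suc_Suc)

lemma coeff_Qpoly_1:
  assumes "l > -1/2"
  shows "coeff (Qpoly l n) 1 = Q_coeff1 l (real n)"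
proof (rule two_term_recurrence_unique[where a = "\<lambda>n. Q_alpha l (real n + 2)"
      and b = "\<lambda>n. Q_beta l (real n + 2) * 1"])
  show "coeff (Qpoly l (Suc 0)) 1 = Q_coeff1 l (real (Suc 0))"
    using assms by (simp add: Q_coeff1_def field_simps)
  show "coeff (Qpoly l (Suc (Suc n))) 1 = coeff (Qpoly l (Suc n)) 1
      + Q_alpha l (real n + 2) * (coeff (Qpoly l (Suc n)) 1 - coeff (Qpoly l n) 1) - Q_beta l (real n + 2) * 1" for n
    by (simp add: coeff_Qpoly_Suc_Suc coeff_Qpoly_0)
  show "Q_coeff1 l (real (Suc (Suc n))) = Q_coeff1 l (real (Suc n))
      + Q_alpha l (real n + 2) * (Q_coeff1 l (real (Suc n)) - Q_coeff1 l (real n)) - Q_beta l (real n + 2) * 1" for n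
    using Q_coeff1_recurrence[OF assms, of "real n + 2"] by (simp only: real_Suc_Suc_shifts)
qed (simp add: Q_coeff1_def)

lemma coeff_Qpoly_2:
  assumes "l > -1/2"
  shows "coeff (Qpoly l n) 2 = Q_coeff2 l (real n)"
proof (rule two_term_recurrence_unique[where a = "\<lambda>n. Q_alpha l (real n + 2)"
      and b = "\<lambda>n. Q_beta l (real n + 2) * Q_coeff1 l (real (Suc n))"])
  show "coeff (Qpoly l (Suc (Suc n))) 2 = coeff (Qpoly l (Suc n)) 2
      + Q_alpha l (real n + 2) * (coeff (Qpoly l (Suc n)) 2 - coeff (Qpoly l n) 2)
      - Q_beta l (real n + 2) * Q_coeff1 l (real (Suc n))" for n
    using coeff_Qpoly_1[OF assms, of "Suc n"] by (simp add: coeff_Qpoly_Suc_Suc)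
  show "Q_coeff2 l (real (Suc (Suc n))) = Q_coeff2 l (real (Suc n))
      + Q_alpha l (real n + 2) * (Q_coeff2 l (real (Suc n)) - Q_coeff2 l (real n))
      - Q_beta l (real n + 2) * Q_coeff1 l (real (Suc n))" for n
    using Q_coeff2_recurrence[OF assms, of "real n + 2"] by (simp only: real_Suc_Suc_shifts)
qed (simp_all add: Q_coeff2_def numeral_2_eq_2)

lemma coeff_Qtpoly_1:
  assumes "l > -1/2"
  shows "coeff (Qtpoly l n) 1 = Qt_coeff1 l (real n)"
proof (rule two_term_recurrence_unique[where a = "\<lambda>n. Qt_alpha l (real n + 2)"
      and b = "\<lambda>n. Qt_beta l (real n + 2) * 1"])
  show "coeff (Qtpoly l (Suc 0)) 1 = Qt_coeff1 l (real (Suc 0))"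
    using assms by (simp add: Qt_coeff1_def field_simps)
  show "coeff (Qtpoly l (Suc (Suc n))) 1 = coeff (Qtpoly l (Suc n)) 1
      + Qt_alpha l (real n + 2) * (coeff (Qtpoly l (Suc n)) 1 - coeff (Qtpoly l n) 1) - Qt_beta l (real n + 2) * 1" for n
    by (simp add: coeff_Qtpoly_Suc_Suc coeff_Qtpoly_0)
  show "Qt_coeff1 l (real (Suc (Suc n))) = Qt_coeff1 l (real (Suc n))
      + Qt_alpha l (real n + 2) * (Qt_coeff1 l (real (Suc n)) - Qt_coeff1 l (real n)) - Qt_beta l (real n + 2) * 1" for n
    using Qt_coeff1_recurrence[OF assms, of "real n + 2"] by (simp only: real_Suc_Suc_shifts)
qed (simp add: Qt_coeff1_def)

lemma coeff_Qtpoly_2: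
  assumes "l > -1/2"
  shows "coeff (Qtpoly l n) 2 = Qt_coeff2 l (real n)"
proof (rule two_term_recurrence_unique[where a = "\<lambda>n. Qt_alpha l (real n + 2)"
      and b = "\<lambda>n. Qt_beta l (real n + 2) * Qt_coeff1 l (real (Suc n))"])
  show "coeff (Qtpoly l (Suc (Suc n))) 2 = coeff (Qtpoly l (Suc n)) 2
      + Qt_alpha l (real n + 2) * (coeff (Qtpoly l (Suc n)) 2 - coeff (Qtpoly l n) 2)
      - Qt_beta l (real n + 2) * Qt_coeff1 l (real (Suc n))" for n
    using coeff_Qtpoly_1[OF assms, of "Suc n"] by (simp add: coeff_Qtpoly_Suc_Suc)
  show "Qt_coeff2 l (real (Suc (Suc n))) = Qt_coeff2 l (real (Suc n))
      + Qt_alpha l (real n + 2) * (Qt_coeff2 l (real (Suc n)) - Qt_coeff2 l (real n))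
      - Qt_beta l (real n + 2) * Qt_coeff1 l (real (Suc n))" for n
    using Qt_coeff2_recurrence[OF assms, of "real n + 2"] by (simp only: real_Suc_Suc_shifts)
qed (simp_all add: Qt_coeff2_def numeral_2_eq_2)

theorem lemma3p4:
  fixes l :: real and m :: nat
  assumes "l > -1/2" and "m \<ge> 1"
  shows "Acoef l 2 m =
           (real m - 1) * real m * (real m + 1) * (real m + l) * (real m + l + 1) * (real m + l + 2)
           * ((real m)^2 + (l + 1) * real m + (4*l^2 + 2*l - 14) / (3 * (2*l + 3)))
           / (2 * (2*l + 1) * (2*l + 5)) \<and>
         Atcoef l 2 m =
           (real m - 1) * real m * (real m + l) * (real m + l + 1) * r_lam l (real m)
           / (24 * (2*l + 1) * (2*l + 3) * (2*l + 5))"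
proof -
  have "2*l + 3 \<noteq> 0" using assms(1) by simp
  then show ?thesis
    unfolding Acoef_def Atcoef_def coeff_Qpoly_2[OF assms(1)] coeff_Qtpoly_2[OF assms(1)]
      Q_coeff2_def Qt_coeff2_def
    by (simp add: field_simps)
qed

end
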